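(* Let $d,p\in\mathbb N$, let $\mathcal X$ be a bounded, nonempty, Borel subset of $\mathbb R^d$ and $P_X$ a Borel probability distribution on $\mathcal X$. For $a\ge0$ let $k_{p,a}(x,y)=(x^\top y+a)^p$. Then there exists $C(p,d,P_X)>0$, depending only on $p$, $d$ and $P_X$, such that for all $a\ge0$ and $\gamma>0$, the quantity $H_\gamma$ associated with $k_{p,a}$ and $P_X$ satisfies $H_\gamma\le C(p,d,P_X)$.
   Context: For a kernel $k$ with a decomposition $k(x,y)=\sum_{r\in\mathcal R}\nu_re_r(x)e_r(y)$ where the $\nu_r>0$ are the (positive) eigenvalues of the integral operator $f\mapsto\int k(x,\cdot)f(x)\,dP_X(x)$ on $L_2(P_X)$ and $(e_r)$ are corresponding $L_2(P_X)$-orthonormal eigenfunctions, define for $\gamma>0$: $a_r=1/(1+\gamma/\nu_r)$ and $H_\gamma=\sup_{x\in\mathcal X}\sum_{r\in\mathcal R}a_re_r(x)^2$ (this does not depend on the choice of orthonormal eigenfunctions). *)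

theory Defs
  imports "HOL-Probability.Probability"
begin

definition poly_kernel :: "nat \<Rightarrow> real \<Rightarrow> real ^ 'd \<Rightarrow> real ^ 'd \<Rightarrow> real" where
  "poly_kernel p a x y = (x \<bullet> y + a) ^ p"

definition eigen_decomp ::
  "('a \<Rightarrow> 'a \<Rightarrow> real) \<Rightarrow> 'a measure \<Rightarrow> 'a set \<Rightarrow> nat set \<Rightarrow> (nat \<Rightarrow> real) \<Rightarrow> (nat \<Rightarrow> 'a \<Rightarrow> real) \<Rightarrow> bool"
where
  "eigen_decomp k P X R \<nu> e \<longleftrightarrow>
     (\<forall>r\<in>R. \<nu> r > 0) \<and>
     (\<forall>r\<in>R. e r \<in> borel_measurable P \<and> integrable P (\<lambda>x. (e r x)\<^sup>2)) \<and>
     (\<forall>r\<in>R. \<forall>s\<in>R. (\<integral>x. e r x * e s x \<partial>P) = (if r = s then 1 else 0)) \<and>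
     (\<forall>r\<in>R. \<forall>y\<in>X. integrable P (\<lambda>x. k x y * e r x) \<and>
                     (\<integral>x. k x y * e r x \<partial>P) = \<nu> r * e r y) \<and>
     (\<forall>x\<in>X. \<forall>y\<in>X. ((\<lambda>r. \<nu> r * e r x * e r y) has_sum k x y) R)"

definition H_gamma ::
  "real \<Rightarrow> 'a set \<Rightarrow> nat set \<Rightarrow> (nat \<Rightarrow> real) \<Rightarrow> (nat \<Rightarrow> 'a \<Rightarrow> real) \<Rightarrow> ereal"
where
  "H_gamma \<gamma> X R \<nu> e =
     (SUP x\<in>X. ereal (\<Sum>\<^sub>\<infinity>r\<in>R. (1 / (1 + \<gamma> / \<nu> r)) * (e r x)\<^sup>2))"

end

theory Submission
  imports Defs
begin

(* The kernel (x \<bullet> y + a)^p has the finite feature expansion \<Sum>s w_a(s) m_s(x) m_s(y) over the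
   words s of length p in the coordinates and an extra constant coordinate, with nonnegative
   weights w_a whose support only depends on whether a > 0.  Every eigenfunction is a combination
   of the features of positive weight and, conversely, every such feature is a combination of the
   eigenfunctions.  Hence the eigenfunctions of any two decompositions with the same support are
   orthonormal systems in the same finite-dimensional space, and Bessel's inequality bounds
   \<Sum>r e_r(x)^2 by the same sum for one fixed reference decomposition, which is bounded on X.
   Since a_r \<le> 1, H_gamma is at most sup_x \<Sum>r e_r(x)^2, and there are only finitely many
   supports. *)

lemma sum_weighted_square_diff_lincomb:
  fixes w v :: "'s \<Rightarrow> real" and u :: "'i \<Rightarrow> 's \<Rightarrow> real"
  shows "(\<Sum>s\<in>S. w s * (v s - (\<Sum>i\<in>I. c i * u i s))\<^sup>2)
     = (\<Sum>s\<in>S. w s * (v s)\<^sup>2) - 2 * (\<Sum>i\<in>I. c i * (\<Sum>s\<in>S. w s * v s * u i s))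
       + (\<Sum>i\<in>I. \<Sum>j\<in>I. c i * c j * (\<Sum>s\<in>S. w s * u i s * u j s))"
proof -
  have pointwise: "w s * (v s - (\<Sum>i\<in>I. c i * u i s))\<^sup>2
      = w s * (v s)\<^sup>2 - 2 * (\<Sum>i\<in>I. c i * (w s * v s * u i s))
        + (\<Sum>i\<in>I. \<Sum>j\<in>I. c i * c j * (w s * u i s * u j s))" for s
    by (simp add: power2_eq_square algebra_simps sum_distrib_left sum_product)
  show ?thesis
    unfolding pointwise sum.distrib sum_subtractf sum_distrib_left[symmetric]
    by (simp add: sum_distrib_left sum.swap[of _ S] mult_ac)
qed

lemma bessel_inequality_weighted:
  fixes w v :: "'s \<Rightarrow> real" and u :: "'i \<Rightarrow> 's \<Rightarrow> real"
  assumes "finite I" and "\<And>s. s \<in> S \<Longrightarrow> w s \<ge> 0"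
    and "\<And>i j. i \<in> I \<Longrightarrow> j \<in> I \<Longrightarrow> (\<Sum>s\<in>S. w s * u i s * u j s) = (if i = j then 1 else 0)"
  shows "(\<Sum>i\<in>I. (\<Sum>s\<in>S. w s * v s * u i s)\<^sup>2) \<le> (\<Sum>s\<in>S. w s * (v s)\<^sup>2)"
proof -
  define c where "c i = (\<Sum>s\<in>S. w s * v s * u i s)" for i
  have "0 \<le> (\<Sum>s\<in>S. w s * (v s - (\<Sum>i\<in>I. c i * u i s))\<^sup>2)"
    using assms(2) by (intro sum_nonneg) auto
  also have "\<dots> = (\<Sum>s\<in>S. w s * (v s)\<^sup>2) - 2 * (\<Sum>i\<in>I. c i * c i)
      + (\<Sum>i\<in>I. \<Sum>j\<in>I. c i * c j * (if i = j then 1 else 0))"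
    unfolding sum_weighted_square_diff_lincomb c_def[symmetric] using assms(3)
    by (intro arg_cong2[where f = "(+)"] sum.cong) auto
  also have "(\<Sum>i\<in>I. \<Sum>j\<in>I. c i * c j * (if i = j then 1 else 0)) = (\<Sum>i\<in>I. c i * c i)"
    using assms(1) by (simp add: if_distrib sum.If_cases cong: if_cong)
  finally show ?thesis by (simp add: c_def power2_eq_square)
qed

text \<open>Bessel's inequality for the unit vector at \<open>s0\<close> gives \<open>\<Sum>i\<in>I. w s0 * (u i s0)\<^sup>2 \<le> 1\<close>;
  summing over \<open>s0 \<in> S\<close> counts every \<open>i \<in> I\<close> once.\<close>
lemma card_le_of_orthonormal_weighted:
  fixes w :: "'s \<Rightarrow> real" and u :: "'i \<Rightarrow> 's \<Rightarrow> real"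
  assumes "finite I" "finite S" and w: "\<And>s. s \<in> S \<Longrightarrow> w s \<ge> 0"
    and orth: "\<And>i j. i \<in> I \<Longrightarrow> j \<in> I \<Longrightarrow> (\<Sum>s\<in>S. w s * u i s * u j s) = (if i = j then 1 else 0)"
  shows "card I \<le> card S"
proof -
  have local_bound: "(\<Sum>i\<in>I. w s0 * (u i s0)\<^sup>2) \<le> 1" if s0: "s0 \<in> S" for s0
  proof -
    have "(\<Sum>i\<in>I. (\<Sum>s\<in>S. w s * (if s = s0 then 1 else 0) * u i s)\<^sup>2)
        \<le> (\<Sum>s\<in>S. w s * (if s = s0 then 1 else 0)\<^sup>2)"
      by (rule bessel_inequality_weighted[OF assms(1) w orth])
    moreover have "(\<Sum>s\<in>S. w s * (if s = s0 then 1 else 0) * u i s) = w s0 * u i s0" for i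
      using s0 assms(2) by (subst sum.cong[OF refl, where h = "\<lambda>s. if s = s0 then w s0 * u i s0 else 0"]) auto
    moreover have "(\<Sum>s\<in>S. w s * (if s = s0 then 1 else 0)\<^sup>2) = w s0"
      using s0 assms(2) by (subst sum.cong[OF refl, where h = "\<lambda>s. if s = s0 then w s0 else 0"]) auto
    ultimately have bessel: "(\<Sum>i\<in>I. (w s0 * u i s0)\<^sup>2) \<le> w s0"
      by simp
    show ?thesis
    proof (cases "w s0 = 0")
      case False
      then have "w s0 > 0" using w[OF s0] by simp
      moreover have "(\<Sum>i\<in>I. (w s0 * u i s0)\<^sup>2) = w s0 * (\<Sum>i\<in>I. w s0 * (u i s0)\<^sup>2)"
        by (simp add: sum_distrib_left power2_eq_square mult_ac)
      ultimately show ?thesis using bessel by (simp add: mult_le_cancel_left1)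
    qed simp
  qed
  have "real (card I) = (\<Sum>i\<in>I. \<Sum>s\<in>S. w s * (u i s)\<^sup>2)"
    using orth by (simp add: power2_eq_square mult_ac)
  also have "\<dots> = (\<Sum>s\<in>S. \<Sum>i\<in>I. w s * (u i s)\<^sup>2)" by (rule sum.swap)
  also have "\<dots> \<le> (\<Sum>s\<in>S. 1)" by (intro sum_mono local_bound)
  finally show ?thesis by simp
qed

definition L2_orthonormal :: "'a measure \<Rightarrow> 'i set \<Rightarrow> ('i \<Rightarrow> 'a \<Rightarrow> real) \<Rightarrow> bool" where
  "L2_orthonormal M I f \<longleftrightarrow>
     (\<forall>i\<in>I. f i \<in> borel_measurable M \<and> integrable M (\<lambda>x. (f i x)\<^sup>2)) \<and>
     (\<forall>i\<in>I. \<forall>j\<in>I. (\<integral>x. f i x * f j x \<partial>M) = (if i = j then 1 else 0))"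

lemma integrable_mult_of_square_integrable:
  fixes f g :: "'a \<Rightarrow> real"
  assumes "f \<in> borel_measurable M" "g \<in> borel_measurable M"
    and "integrable M (\<lambda>x. (f x)\<^sup>2)" "integrable M (\<lambda>x. (g x)\<^sup>2)"
  shows "integrable M (\<lambda>x. f x * g x)"
proof (rule Bochner_Integration.integrable_bound)
  show "integrable M (\<lambda>x. (f x)\<^sup>2 + (g x)\<^sup>2)" using assms(3,4) by simp
  show "(\<lambda>x. f x * g x) \<in> borel_measurable M" using assms(1,2) by measurable
  have "\<bar>f x * g x\<bar> \<le> (f x)\<^sup>2 + (g x)\<^sup>2" for x
  proof -
    have "2 * \<bar>f x\<bar> * \<bar>g x\<bar> \<le> \<bar>f x\<bar>\<^sup>2 + \<bar>g x\<bar>\<^sup>2" by (rule sum_squares_bound)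
    moreover have "0 \<le> \<bar>f x\<bar> * \<bar>g x\<bar>" by simp
    ultimately show ?thesis by (simp only: abs_mult power2_abs)
  qed
  then show "AE x in M. norm (f x * g x) \<le> norm ((f x)\<^sup>2 + (g x)\<^sup>2)" by simp
qed

lemma integral_lincomb_mult_L2_orthonormal:
  assumes "L2_orthonormal M I f" "finite I"
  shows "(\<integral>x. (\<Sum>i\<in>I. c i * f i x) * (\<Sum>i\<in>I. d i * f i x) \<partial>M) = (\<Sum>i\<in>I. c i * d i)"
proof -
  have integrable: "integrable M (\<lambda>x. f i x * f j x)" if "i \<in> I" "j \<in> I" for i j
    using assms(1) that by (intro integrable_mult_of_square_integrable) (auto simp: L2_orthonormal_def)
  have "(\<integral>x. (\<Sum>i\<in>I. c i * f i x) * (\<Sum>i\<in>I. d i * f i x) \<partial>M)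
      = (\<integral>x. (\<Sum>i\<in>I. \<Sum>j\<in>I. c i * d j * (f i x * f j x)) \<partial>M)"
    by (simp add: sum_product mult_ac)
  also have "\<dots> = (\<Sum>i\<in>I. \<Sum>j\<in>I. c i * d j * (\<integral>x. f i x * f j x \<partial>M))"
    using integrable by (simp add: Bochner_Integration.integral_sum Bochner_Integration.integrable_sum)
  also have "\<dots> = (\<Sum>i\<in>I. \<Sum>j\<in>I. if j = i then c i * d i else 0)"
    using assms(1) by (intro sum.cong refl) (auto simp: L2_orthonormal_def)
  also have "\<dots> = (\<Sum>i\<in>I. c i * d i)"
    using assms(2) by simp
  finally show ?thesis .
qed

definition lincomb_on :: "'a set \<Rightarrow> 'i set \<Rightarrow> ('i \<Rightarrow> 'a \<Rightarrow> real) \<Rightarrow> ('a \<Rightarrow> real) \<Rightarrow> bool" where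
  "lincomb_on X I g f \<longleftrightarrow> (\<exists>c. \<forall>x\<in>X. f x = (\<Sum>i\<in>I. c i * g i x))"

lemma lincomb_on_trans:
  assumes "lincomb_on X I g f" and "\<And>i. i \<in> I \<Longrightarrow> lincomb_on X J h (g i)"
  shows "lincomb_on X J h f"
proof -
  obtain c where c: "\<And>x. x \<in> X \<Longrightarrow> f x = (\<Sum>i\<in>I. c i * g i x)"
    using assms(1) by (auto simp: lincomb_on_def)
  obtain d where d: "\<And>i x. i \<in> I \<Longrightarrow> x \<in> X \<Longrightarrow> g i x = (\<Sum>j\<in>J. d i j * h j x)"
    using assms(2) unfolding lincomb_on_def by metis
  have "f x = (\<Sum>j\<in>J. (\<Sum>i\<in>I. c i * d i j) * h j x)" if "x \<in> X" for x
    using that by (simp add: c d sum_distrib_left sum_distrib_right sum.swap[of _ I] mult_ac)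
  then show ?thesis by (auto simp: lincomb_on_def)
qed

lemma lincomb_on_bounded:
  assumes "lincomb_on X I g f" "finite I" and "\<And>i. i \<in> I \<Longrightarrow> \<exists>B. \<forall>x\<in>X. \<bar>g i x\<bar> \<le> B"
  shows "\<exists>B. \<forall>x\<in>X. \<bar>f x\<bar> \<le> B"
proof -
  obtain c where c: "\<And>x. x \<in> X \<Longrightarrow> f x = (\<Sum>i\<in>I. c i * g i x)"
    using assms(1) by (auto simp: lincomb_on_def)
  obtain B where B: "\<And>i x. i \<in> I \<Longrightarrow> x \<in> X \<Longrightarrow> \<bar>g i x\<bar> \<le> B i"
    using assms(3) by metis
  have "\<bar>f x\<bar> \<le> (\<Sum>i\<in>I. \<bar>c i\<bar> * B i)" if "x \<in> X" for x
  proof -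
    have "\<bar>f x\<bar> \<le> (\<Sum>i\<in>I. \<bar>c i * g i x\<bar>)" unfolding c[OF that] by (rule sum_abs)
    also have "\<dots> \<le> (\<Sum>i\<in>I. \<bar>c i\<bar> * B i)"
      using B that by (auto simp: abs_mult intro!: sum_mono mult_left_mono)
    finally show ?thesis .
  qed
  then show ?thesis by blast
qed

text \<open>The coefficients of the \<open>f i\<close> with respect to the \<open>g j\<close> form an orthonormal system in
  \<open>\<real>\<^sup>J\<close>, so this is Bessel's inequality there.\<close>
lemma sum_square_le_of_lincomb_on:
  assumes "AE x in M. x \<in> X" and "L2_orthonormal M I f" "L2_orthonormal M J g" "finite I" "finite J"
    and "\<And>i. i \<in> I \<Longrightarrow> lincomb_on X J g (f i)" and "x \<in> X"
  shows "(\<Sum>i\<in>I. (f i x)\<^sup>2) \<le> (\<Sum>j\<in>J. (g j x)\<^sup>2)"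
proof -
  obtain c where c: "\<And>i x. i \<in> I \<Longrightarrow> x \<in> X \<Longrightarrow> f i x = (\<Sum>j\<in>J. c i j * g j x)"
    using assms(6) unfolding lincomb_on_def by metis
  have f_measurable: "f i \<in> borel_measurable M" if "i \<in> I" for i
    using assms(2) that by (auto simp: L2_orthonormal_def)
  have g_measurable: "g j \<in> borel_measurable M" if "j \<in> J" for j
    using assms(3) that by (auto simp: L2_orthonormal_def)
  have "(\<Sum>j\<in>J. 1 * c i j * c i' j) = (if i = i' then 1 else 0)" if "i \<in> I" "i' \<in> I" for i i'
  proof -
    have "(\<integral>y. f i y * f i' y \<partial>M) = (\<integral>y. (\<Sum>j\<in>J. c i j * g j y) * (\<Sum>j\<in>J. c i' j * g j y) \<partial>M)"
    proof (rule integral_cong_AE)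
      show "AE y in M. f i y * f i' y = (\<Sum>j\<in>J. c i j * g j y) * (\<Sum>j\<in>J. c i' j * g j y)"
        using assms(1) by eventually_elim (use c that in presburger)
      show "(\<lambda>y. f i y * f i' y) \<in> borel_measurable M"
        using f_measurable that by measurable
      show "(\<lambda>y. (\<Sum>j\<in>J. c i j * g j y) * (\<Sum>j\<in>J. c i' j * g j y)) \<in> borel_measurable M"
        using g_measurable by (auto intro!: borel_measurable_times borel_measurable_sum)
    qed
    then show ?thesis
      using assms(2) that integral_lincomb_mult_L2_orthonormal[OF assms(3,5)]
      by (simp add: L2_orthonormal_def)
  qed
  then have "(\<Sum>i\<in>I. (\<Sum>j\<in>J. 1 * g j x * c i j)\<^sup>2) \<le> (\<Sum>j\<in>J. 1 * (g j x)\<^sup>2)"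
    by (intro bessel_inequality_weighted assms(4)) auto
  then show ?thesis
    using assms(7) by (simp add: c mult.commute)
qed

definition feature_kernel :: "'s set \<Rightarrow> ('s \<Rightarrow> real) \<Rightarrow> ('s \<Rightarrow> 'a \<Rightarrow> real) \<Rightarrow> 'a \<Rightarrow> 'a \<Rightarrow> real" where
  "feature_kernel S w \<phi> x y = (\<Sum>s\<in>S. w s * \<phi> s x * \<phi> s y)"

locale feature_space = prob_space P for P :: "'a measure" +
  fixes X :: "'a set" and S :: "'s set" and \<phi> :: "'s \<Rightarrow> 'a \<Rightarrow> real"
  assumes AE_in_X: "AE x in P. x \<in> X"
    and finite_features: "finite S"
    and feature_measurable: "s \<in> S \<Longrightarrow> \<phi> s \<in> borel_measurable P"
    and feature_bounded: "s \<in> S \<Longrightarrow> \<exists>B. \<forall>x\<in>X. \<bar>\<phi> s x\<bar> \<le> B"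
begin

lemma feature_square_integrable:
  assumes "s \<in> S" shows "integrable P (\<lambda>x. (\<phi> s x)\<^sup>2)"
proof -
  obtain B where B: "\<And>x. x \<in> X \<Longrightarrow> \<bar>\<phi> s x\<bar> \<le> B" using feature_bounded[OF assms] by blast
  show ?thesis
  proof (rule integrable_const_bound)
    show "AE x in P. norm ((\<phi> s x)\<^sup>2) \<le> B\<^sup>2"
      using AE_in_X by eventually_elim (simp add: B abs_le_square_iff[symmetric] order_trans[OF _ B])
    show "(\<lambda>x. (\<phi> s x)\<^sup>2) \<in> borel_measurable P" using feature_measurable[OF assms] by measurable
  qed
qed

end

locale feature_kernel_eigen = feature_space +
  fixes w :: "'s \<Rightarrow> real" and R :: "nat set" and \<nu> :: "nat \<Rightarrow> real" and e :: "nat \<Rightarrow> 'a \<Rightarrow> real"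
  assumes weight_nonneg: "s \<in> S \<Longrightarrow> 0 \<le> w s"
    and eigen_decomp: "eigen_decomp (feature_kernel S w \<phi>) P X R \<nu> e"
begin

definition coeff :: "'s \<Rightarrow> nat \<Rightarrow> real" where
  "coeff s r = (\<integral>y. \<phi> s y * e r y \<partial>P)"

lemma eigenvalue_pos: "r \<in> R \<Longrightarrow> \<nu> r > 0"
  using eigen_decomp by (simp add: eigen_decomp_def)

lemma L2_orthonormal_eigenfunctions: "L2_orthonormal P R e"
  using eigen_decomp by (simp add: eigen_decomp_def L2_orthonormal_def)

lemma eigenfunction_measurable: "r \<in> R \<Longrightarrow> e r \<in> borel_measurable P"
  using eigen_decomp by (simp add: eigen_decomp_def)

lemma integrable_feature_mult_eigenfunction:
  assumes "s \<in> S" "r \<in> R" shows "integrable P (\<lambda>y. \<phi> s y * e r y)"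
  using assms eigen_decomp
  by (intro integrable_mult_of_square_integrable feature_measurable feature_square_integrable)
     (auto simp: eigen_decomp_def)

lemma eigenfunction_expansion:
  assumes "r \<in> R" "x \<in> X"
  shows "\<nu> r * e r x = (\<Sum>s\<in>S. w s * coeff s r * \<phi> s x)"
proof -
  have "\<nu> r * e r x = (\<integral>y. feature_kernel S w \<phi> y x * e r y \<partial>P)"
    using eigen_decomp assms by (simp add: eigen_decomp_def)
  also have "\<dots> = (\<integral>y. (\<Sum>s\<in>S. (w s * \<phi> s x) * (\<phi> s y * e r y)) \<partial>P)"
    by (simp add: feature_kernel_def sum_distrib_left sum_distrib_right mult_ac)
  also have "\<dots> = (\<Sum>s\<in>S. (w s * \<phi> s x) * coeff s r)"
    using integrable_feature_mult_eigenfunction[OF _ assms(1)]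
    by (subst Bochner_Integration.integral_sum) (auto simp: coeff_def)
  finally show ?thesis by (simp add: mult_ac)
qed

lemma coeff_gram:
  assumes "r \<in> R" "q \<in> R"
  shows "(\<Sum>s\<in>S. w s * coeff s r * coeff s q) = (if r = q then \<nu> r else 0)"
proof -
  have "(\<integral>y. (\<Sum>s\<in>S. (w s * coeff s q) * (\<phi> s y * e r y)) \<partial>P) = (\<Sum>s\<in>S. (w s * coeff s q) * coeff s r)"
    using integrable_feature_mult_eigenfunction[OF _ assms(1)]
    by (subst Bochner_Integration.integral_sum) (auto simp: coeff_def)
  then have "(\<Sum>s\<in>S. w s * coeff s r * coeff s q) = (\<integral>y. (\<Sum>s\<in>S. (w s * coeff s q) * (\<phi> s y * e r y)) \<partial>P)"
    by (simp add: mult_ac)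
  also have "\<dots> = (\<integral>y. \<nu> q * (e q y * e r y) \<partial>P)"
  proof (rule integral_cong_AE)
    show "AE y in P. (\<Sum>s\<in>S. (w s * coeff s q) * (\<phi> s y * e r y)) = \<nu> q * (e q y * e r y)"
      using AE_in_X
    proof eventually_elim
      case (elim y)
      have "(\<Sum>s\<in>S. (w s * coeff s q) * (\<phi> s y * e r y)) = (\<Sum>s\<in>S. w s * coeff s q * \<phi> s y) * e r y"
        by (simp add: sum_distrib_left mult_ac)
      then show ?case using eigenfunction_expansion[OF assms(2) elim] by simp
    qed
    show "(\<lambda>y. \<Sum>s\<in>S. w s * coeff s q * (\<phi> s y * e r y)) \<in> borel_measurable P"
      using eigenfunction_measurable[OF assms(1)] feature_measurable
      by (auto intro!: borel_measurable_times borel_measurable_sum)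
    show "(\<lambda>y. \<nu> q * (e q y * e r y)) \<in> borel_measurable P"
      using eigenfunction_measurable assms by measurable
  qed
  also have "\<dots> = (if r = q then \<nu> r else 0)"
    using eigen_decomp assms by (auto simp: eigen_decomp_def)
  finally show ?thesis .
qed

text \<open>The vectors \<open>coeff _ r / sqrt (\<nu> r)\<close> are orthonormal for the \<open>w\<close>-weighted inner product
  on \<open>\<real>\<^sup>S\<close>.\<close>
lemma finite_eigenvalues: "finite R"
proof -
  have "card I \<le> card S" if "I \<subseteq> R" "finite I" for I
  proof (rule card_le_of_orthonormal_weighted[where w = w and u = "\<lambda>r s. coeff s r / sqrt (\<nu> r)"])
    fix r q assume "r \<in> I" "q \<in> I"
    then have "r \<in> R" "q \<in> R" using that by auto
    have "(\<Sum>s\<in>S. w s * (coeff s r / sqrt (\<nu> r)) * (coeff s q / sqrt (\<nu> q)))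
        = (\<Sum>s\<in>S. w s * coeff s r * coeff s q) / (sqrt (\<nu> r) * sqrt (\<nu> q))"
      by (simp add: sum_divide_distrib)
    also have "\<dots> = (if r = q then 1 else 0)"
      using coeff_gram[OF \<open>r \<in> R\<close> \<open>q \<in> R\<close>] eigenvalue_pos[OF \<open>r \<in> R\<close>]
      by (auto simp: real_sqrt_mult[symmetric])
    finally show "(\<Sum>s\<in>S. w s * (coeff s r / sqrt (\<nu> r)) * (coeff s q / sqrt (\<nu> q))) = (if r = q then 1 else 0)" .
  qed (use that finite_features weight_nonneg in auto)
  then show ?thesis using finite_if_finite_subsets_card_bdd by blast
qed

lemma eigenfunction_lincomb_features: "r \<in> R \<Longrightarrow> lincomb_on X {s\<in>S. w s \<noteq> 0} \<phi> (e r)"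
proof -
  assume r: "r \<in> R"
  have expansion: "e r x = (\<Sum>s\<in>{s\<in>S. w s \<noteq> 0}. (w s * coeff s r / \<nu> r) * \<phi> s x)"
    if "x \<in> X" for x
  proof -
    have "e r x = (\<Sum>s\<in>S. (w s * coeff s r / \<nu> r) * \<phi> s x)"
      using eigenfunction_expansion[OF r that] eigenvalue_pos[OF r]
      by (simp add: sum_divide_distrib[symmetric] nonzero_eq_divide_eq mult.commute)
    also have "\<dots> = (\<Sum>s\<in>{s\<in>S. w s \<noteq> 0}. (w s * coeff s r / \<nu> r) * \<phi> s x)"
      using finite_features by (intro sum.mono_neutral_right) auto
    finally show ?thesis .
  qed
  show ?thesis
    unfolding lincomb_on_def by (intro exI[of _ "\<lambda>s. w s * coeff s r / \<nu> r"] ballI expansion)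
qed

lemma eigenfunction_bounded: "r \<in> R \<Longrightarrow> \<exists>B. \<forall>x\<in>X. \<bar>e r x\<bar> \<le> B"
  using finite_features feature_bounded
  by (intro lincomb_on_bounded[OF eigenfunction_lincomb_features]) auto

lemma feature_kernel_diagonal:
  assumes "x \<in> X" shows "feature_kernel S w \<phi> x x = (\<Sum>r\<in>R. \<nu> r * e r x * e r x)"
proof -
  have "((\<lambda>r. \<nu> r * e r x * e r x) has_sum feature_kernel S w \<phi> x x) R"
    using eigen_decomp assms by (simp add: eigen_decomp_def)
  from has_sum_unique[OF this has_sum_finite[OF finite_eigenvalues]] show ?thesis .
qed

text \<open>The residuals \<open>\<phi> s x - (\<Sum>r\<in>R. coeff s r * e r x)\<close> have vanishing weighted sum of squares:
  expanding the square, all three terms reduce to \<open>\<Sum>r\<in>R. \<nu> r * (e r x)\<^sup>2\<close>.\<close>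
lemma feature_lincomb_eigenfunctions:
  assumes "s \<in> S" "w s \<noteq> 0" shows "lincomb_on X R e (\<phi> s)"
proof -
  have "\<phi> s x = (\<Sum>r\<in>R. coeff s r * e r x)" if x: "x \<in> X" for x
  proof -
    let ?residual = "\<lambda>t. \<phi> t x - (\<Sum>r\<in>R. e r x * coeff t r)"
    have "(\<Sum>t\<in>S. w t * (?residual t)\<^sup>2)
        = (\<Sum>t\<in>S. w t * (\<phi> t x)\<^sup>2) - 2 * (\<Sum>r\<in>R. e r x * (\<Sum>t\<in>S. w t * \<phi> t x * coeff t r))
          + (\<Sum>r\<in>R. \<Sum>q\<in>R. e r x * e q x * (\<Sum>t\<in>S. w t * coeff t r * coeff t q))"
      by (rule sum_weighted_square_diff_lincomb)
    also have "\<dots> = (\<Sum>r\<in>R. \<nu> r * e r x * e r x) - 2 * (\<Sum>r\<in>R. e r x * (\<nu> r * e r x))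
          + (\<Sum>r\<in>R. \<Sum>q\<in>R. if q = r then e r x * e r x * \<nu> r else 0)"
      using feature_kernel_diagonal[OF x] eigenfunction_expansion[OF _ x] coeff_gram
      by (intro arg_cong2[where f = "(+)"] arg_cong2[where f = "(-)"] arg_cong2[where f = "(*)"] refl
          sum.cong) (auto simp: feature_kernel_def power2_eq_square mult_ac)
    also have "\<dots> = 0"
      using finite_eigenvalues by (simp add: sum_distrib_left mult_ac)
    finally have "(\<Sum>t\<in>S. w t * (?residual t)\<^sup>2) = 0" .
    then have "w s * (?residual s)\<^sup>2 = 0"
      using finite_features weight_nonneg assms(1) by (subst (asm) sum_nonneg_eq_0_iff) auto
    then show ?thesis using assms(2) by (simp add: mult.commute)
  qed
  then show ?thesis by (auto simp: lincomb_on_def)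
qed

end

context feature_space
begin

text \<open>On \<open>X\<close>, the eigenfunctions of both decompositions span the span of the features of nonzero
  weight.\<close>
lemma sum_square_eigenfunctions_le:
  assumes "feature_kernel_eigen P X S \<phi> w R \<nu> e" "feature_kernel_eigen P X S \<phi> w' R' \<nu>' e'"
    and "{s\<in>S. w s \<noteq> 0} = {s\<in>S. w' s \<noteq> 0}" and "x \<in> X"
  shows "(\<Sum>r\<in>R. (e r x)\<^sup>2) \<le> (\<Sum>r\<in>R'. (e' r x)\<^sup>2)"
proof -
  interpret E: feature_kernel_eigen P X S \<phi> w R \<nu> e by fact
  interpret E': feature_kernel_eigen P X S \<phi> w' R' \<nu>' e' by fact
  have "lincomb_on X R' e' (e r)" if "r \<in> R" for r
    by (rule lincomb_on_trans[OF E.eigenfunction_lincomb_features[OF that]])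
      (use E'.feature_lincomb_eigenfunctions assms(3) in auto)
  then show ?thesis
    using AE_in_X E.L2_orthonormal_eigenfunctions E'.L2_orthonormal_eigenfunctions
      E.finite_eigenvalues E'.finite_eigenvalues assms(4)
    by (intro sum_square_le_of_lincomb_on) auto
qed

text \<open>If no eigen-decomposition with support \<open>T\<close> exists the claim is vacuous; otherwise any
  one of them serves as a reference bounding all the others.\<close>
lemma sum_square_eigenfunctions_bound_fixed_support:
  "\<exists>C>0. \<forall>w R \<nu> e. (\<forall>s\<in>S. 0 \<le> w s) \<and> {s\<in>S. w s \<noteq> 0} = T \<and>
      eigen_decomp (feature_kernel S w \<phi>) P X R \<nu> e \<longrightarrow>
      finite R \<and> (\<forall>x\<in>X. (\<Sum>r\<in>R. (e r x)\<^sup>2) \<le> C)"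
proof (cases "\<exists>w R \<nu> e. (\<forall>s\<in>S. 0 \<le> w s) \<and> {s\<in>S. w s \<noteq> 0} = T \<and>
      eigen_decomp (feature_kernel S w \<phi>) P X R \<nu> e")
  case False
  then show ?thesis by (intro exI[of _ 1]) auto
next
  case True
  then obtain w0 R0 \<nu>0 e0 where "\<forall>s\<in>S. 0 \<le> w0 s" and support0: "{s\<in>S. w0 s \<noteq> 0} = T"
    and "eigen_decomp (feature_kernel S w0 \<phi>) P X R0 \<nu>0 e0"
    by blast
  then interpret E0: feature_kernel_eigen P X S \<phi> w0 R0 \<nu>0 e0
    by unfold_locales auto
  obtain B where B: "\<And>r x. r \<in> R0 \<Longrightarrow> x \<in> X \<Longrightarrow> \<bar>e0 r x\<bar> \<le> B r"
    using E0.eigenfunction_bounded by metis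
  define C where "C = 1 + (\<Sum>r\<in>R0. (B r)\<^sup>2)"
  have reference_bound: "(\<Sum>r\<in>R0. (e0 r x)\<^sup>2) \<le> C" if "x \<in> X" for x
  proof -
    have "(\<Sum>r\<in>R0. (e0 r x)\<^sup>2) \<le> (\<Sum>r\<in>R0. (B r)\<^sup>2)"
      using B that by (intro sum_mono) (metis abs_ge_zero power2_abs power_mono)
    then show ?thesis by (simp add: C_def)
  qed
  show ?thesis
  proof (intro exI[of _ C] conjI allI impI ballI)
    show "C > 0" by (simp add: C_def add_pos_nonneg sum_nonneg)
    fix w R \<nu> e x
    assume decomposition: "(\<forall>s\<in>S. 0 \<le> w s) \<and> {s\<in>S. w s \<noteq> 0} = T \<and>
      eigen_decomp (feature_kernel S w \<phi>) P X R \<nu> e"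
    then interpret E: feature_kernel_eigen P X S \<phi> w R \<nu> e
      by unfold_locales auto
    show "finite R" by (rule E.finite_eigenvalues)
    assume "x \<in> X"
    have "(\<Sum>r\<in>R. (e r x)\<^sup>2) \<le> (\<Sum>r\<in>R0. (e0 r x)\<^sup>2)"
      using decomposition support0
      by (intro sum_square_eigenfunctions_le[OF E.feature_kernel_eigen_axioms
          E0.feature_kernel_eigen_axioms _ \<open>x \<in> X\<close>]) auto
    then show "(\<Sum>r\<in>R. (e r x)\<^sup>2) \<le> C" using reference_bound[OF \<open>x \<in> X\<close>] by linarith
  qed
qed


text \<open>There are only finitely many supports \<open>T \<subseteq> S\<close>.\<close>
lemma sum_square_eigenfunctions_uniform_bound:
  obtains C where "C > 0"
    and "\<And>w R \<nu> e. \<forall>s\<in>S. 0 \<le> w s \<Longrightarrow> eigen_decomp (feature_kernel S w \<phi>) P X R \<nu> e \<Longrightarrow>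
      finite R \<and> (\<forall>x\<in>X. (\<Sum>r\<in>R. (e r x)\<^sup>2) \<le> C)"
proof -
  have "\<forall>T. \<exists>C>0. \<forall>w R \<nu> e. (\<forall>s\<in>S. 0 \<le> w s) \<and> {s\<in>S. w s \<noteq> 0} = T \<and>
      eigen_decomp (feature_kernel S w \<phi>) P X R \<nu> e \<longrightarrow>
      finite R \<and> (\<forall>x\<in>X. (\<Sum>r\<in>R. (e r x)\<^sup>2) \<le> C)"
    using sum_square_eigenfunctions_bound_fixed_support by blast
  from choice[OF this] obtain C where C: "\<forall>T. C T > 0 \<and> (\<forall>w R \<nu> e. (\<forall>s\<in>S. 0 \<le> w s) \<and>
      {s\<in>S. w s \<noteq> 0} = T \<and> eigen_decomp (feature_kernel S w \<phi>) P X R \<nu> e \<longrightarrow>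
      finite R \<and> (\<forall>x\<in>X. (\<Sum>r\<in>R. (e r x)\<^sup>2) \<le> C T))"
    by blast
  show ?thesis
  proof (rule that[of "\<Sum>T\<in>Pow S. C T"])
    show "(\<Sum>T\<in>Pow S. C T) > 0"
      using C finite_features by (intro sum_pos) auto
    fix w R \<nu> e
    assume "\<forall>s\<in>S. 0 \<le> w s" "eigen_decomp (feature_kernel S w \<phi>) P X R \<nu> e"
    then have "finite R \<and> (\<forall>x\<in>X. (\<Sum>r\<in>R. (e r x)\<^sup>2) \<le> C {s\<in>S. w s \<noteq> 0})"
      using C by blast
    moreover have "C {s\<in>S. w s \<noteq> 0} \<le> (\<Sum>T\<in>Pow S. C T)"
      using C finite_features by (intro member_le_sum) (auto intro: less_imp_le)
    ultimately show "finite R \<and> (\<forall>x\<in>X. (\<Sum>r\<in>R. (e r x)\<^sup>2) \<le> (\<Sum>T\<in>Pow S. C T))"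
      by (meson order_trans)
  qed
qed

end

lemma H_gamma_le_of_sum_square_le:
  assumes "finite R" "\<gamma> \<ge> 0" "\<And>r. r \<in> R \<Longrightarrow> \<nu> r > 0" "\<And>x. x \<in> X \<Longrightarrow> (\<Sum>r\<in>R. (e r x)\<^sup>2) \<le> C"
  shows "H_gamma \<gamma> X R \<nu> e \<le> ereal C"
  unfolding H_gamma_def
proof (rule SUP_least)
  fix x assume "x \<in> X"
  have "(\<Sum>r\<in>R. (1 / (1 + \<gamma> / \<nu> r)) * (e r x)\<^sup>2) \<le> (\<Sum>r\<in>R. (e r x)\<^sup>2)"
  proof (rule sum_mono)
    fix r assume "r \<in> R"
    then have "0 \<le> \<gamma> / \<nu> r" using assms(2) assms(3)[of r] by simp
    then show "(1 / (1 + \<gamma> / \<nu> r)) * (e r x)\<^sup>2 \<le> (e r x)\<^sup>2"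
      by (intro mult_left_le_one_le) auto
  qed
  also have "\<dots> \<le> C" using assms(4) \<open>x \<in> X\<close> .
  finally show "ereal (\<Sum>\<^sub>\<infinity>r\<in>R. (1 / (1 + \<gamma> / \<nu> r)) * (e r x)\<^sup>2) \<le> ereal C"
    using assms(1) by simp
qed

text \<open>The extra coordinate \<open>None\<close> is the constant \<open>1\<close> with weight \<open>a\<close>, so that \<open>x \<bullet> y + a\<close>
  is a weighted inner product of the homogeneous coordinates of \<open>x\<close> and \<open>y\<close>.\<close>
definition homogeneous_coord :: "'d option \<Rightarrow> real ^ 'd \<Rightarrow> real" where
  "homogeneous_coord j x = (case j of None \<Rightarrow> 1 | Some i \<Rightarrow> x $ i)"

definition homogeneous_weight :: "real \<Rightarrow> 'd option \<Rightarrow> real" where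
  "homogeneous_weight a j = (case j of None \<Rightarrow> a | Some i \<Rightarrow> 1)"

definition monomial :: "'d option list \<Rightarrow> real ^ 'd \<Rightarrow> real" where
  "monomial s x = prod_list (map (\<lambda>j. homogeneous_coord j x) s)"

definition monomial_weight :: "real \<Rightarrow> 'd option list \<Rightarrow> real" where
  "monomial_weight a s = prod_list (map (homogeneous_weight a) s)"

lemma inner_add_eq_sum_homogeneous:
  fixes x y :: "real ^ 'd"
  shows "x \<bullet> y + a = (\<Sum>j\<in>UNIV. homogeneous_weight a j * homogeneous_coord j x * homogeneous_coord j y)"
proof -
  have "(\<Sum>j\<in>UNIV. homogeneous_weight a j * homogeneous_coord j x * homogeneous_coord j y)
      = a + (\<Sum>j\<in>range Some. homogeneous_weight a j * homogeneous_coord j x * homogeneous_coord j y)"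
    by (subst UNIV_option_conv, subst sum.insert) (auto simp: homogeneous_weight_def homogeneous_coord_def)
  also have "(\<Sum>j\<in>range Some. homogeneous_weight a j * homogeneous_coord j x * homogeneous_coord j y)
      = (\<Sum>i\<in>UNIV. x $ i * y $ i)"
    by (subst sum.reindex) (auto simp: homogeneous_weight_def homogeneous_coord_def)
  finally show ?thesis by (simp add: inner_vec_def)
qed

lemma poly_kernel_eq_feature_kernel:
  "poly_kernel p a = feature_kernel {s. length s = p} (monomial_weight a) (monomial :: 'd option list \<Rightarrow> real ^ 'd \<Rightarrow> real)"
proof (intro ext)
  fix x y :: "real ^ 'd"
  show "poly_kernel p a x y = feature_kernel {s. length s = p} (monomial_weight a) monomial x y"
    unfolding poly_kernel_def feature_kernel_def
  proof (induction p)
    case 0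
    then show ?case by (simp add: monomial_weight_def monomial_def)
  next
    case (Suc p)
    let ?term = "\<lambda>s. monomial_weight a s * monomial s x * monomial s y"
    have words: "{s. length s = Suc p} = (\<lambda>(s, j). j # s) ` ({s. length s = p} \<times> UNIV)"
      using lists_length_Suc_eq[of UNIV p] by simp
    have "(\<Sum>s | length s = Suc p. ?term s) = (\<Sum>(s, j)\<in>{s. length s = p} \<times> UNIV. ?term (j # s))"
      unfolding words by (subst sum.reindex) (auto simp: inj_on_def case_prod_unfold)
    also have "\<dots> = (\<Sum>s | length s = p. \<Sum>j\<in>UNIV.
        (homogeneous_weight a j * homogeneous_coord j x * homogeneous_coord j y) * ?term s)"
      by (subst sum.cartesian_product[symmetric]) (simp add: monomial_weight_def monomial_def mult_ac)
    also have "\<dots> = (x \<bullet> y + a) * (\<Sum>s | length s = p. ?term s)"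
      by (simp add: inner_add_eq_sum_homogeneous sum_product sum.swap[of _ "{s. length s = p}"])
    finally show ?case using Suc by simp
  qed
qed

lemma monomial_weight_nonneg: "a \<ge> 0 \<Longrightarrow> monomial_weight a s \<ge> 0"
  unfolding monomial_weight_def
  by (induction s) (auto simp: homogeneous_weight_def split: option.splits)

lemma homogeneous_coord_measurable [measurable]: "homogeneous_coord j \<in> borel_measurable borel"
  by (cases j) (auto simp: homogeneous_coord_def[abs_def])

lemma monomial_measurable [measurable]: "monomial s \<in> borel_measurable borel"
  unfolding monomial_def by (induction s) auto

lemma monomial_bounded:
  assumes "\<And>x. x \<in> X \<Longrightarrow> norm x \<le> B" and "x \<in> X"
  shows "\<bar>monomial s x\<bar> \<le> max 1 B ^ length s"
proof (induction s)
  case (Cons j s)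
  have "\<bar>homogeneous_coord j x\<bar> \<le> max 1 B"
  proof (cases j)
    case (Some i)
    have "\<bar>x $ i\<bar> \<le> B" using assms component_le_norm_cart[of x i] by force
    then show ?thesis by (simp add: Some homogeneous_coord_def)
  qed (simp add: homogeneous_coord_def)
  then show ?case
    using Cons by (auto simp: monomial_def abs_mult intro!: mult_mono)
qed (simp add: monomial_def)

lemma feature_space_monomials:
  fixes X :: "(real ^ 'd) set" and P :: "(real ^ 'd) measure"
  assumes "X \<in> sets borel" and "bounded X"
    and "prob_space P" and "sets P = sets borel" and "emeasure P X = 1"
  shows "feature_space P X {s. length s = p} monomial"
proof -
  interpret prob_space P by fact
  obtain B where "\<And>x. x \<in> X \<Longrightarrow> norm x \<le> B" using assms(2) by (auto simp: bounded_iff)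
  then have "\<exists>B. \<forall>x\<in>X. \<bar>monomial s x\<bar> \<le> B" for s
    using monomial_bounded by blast
  moreover have "AE x in P. x \<in> X"
    using assms(1,4,5) by (intro AE_in_set_eq_1[THEN iffD2]) (auto simp: emeasure_eq_measure)
  moreover have "finite {s :: 'd option list. length s = p}"
    using finite_lists_length_eq[of "UNIV :: 'd option set" p] by simp
  ultimately show ?thesis
    using assms(4) by unfold_locales (auto simp: measurable_cong_sets[OF assms(4) refl])
qed

theorem lemma3:
  fixes p :: nat and X :: "(real ^ 'd) set" and P :: "(real ^ 'd) measure"
  assumes "X \<in> sets borel" and "bounded X" and "X \<noteq> {}"
    and "prob_space P" and "sets P = sets borel" and "emeasure P X = 1"
  shows "\<exists>C>0. \<forall>a\<ge>0. \<forall>\<gamma>>0. \<forall>R \<nu> e.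
           eigen_decomp (poly_kernel p a) P X R \<nu> e \<longrightarrow> H_gamma \<gamma> X R \<nu> e \<le> ereal C"
proof -
  interpret feature_space P X "{s :: 'd option list. length s = p}" monomial
    using assms(1,2,4-6) by (rule feature_space_monomials)
  obtain C where "C > 0" and C: "\<And>w R \<nu> e. \<forall>s\<in>{s. length s = p}. 0 \<le> w s \<Longrightarrow>
      eigen_decomp (feature_kernel {s. length s = p} w monomial) P X R \<nu> e \<Longrightarrow>
      finite R \<and> (\<forall>x\<in>X. (\<Sum>r\<in>R. (e r x)\<^sup>2) \<le> C)"
    using sum_square_eigenfunctions_uniform_bound by blast
  show ?thesis
  proof (intro exI[of _ C] conjI allI impI \<open>C > 0\<close>)
    fix a \<gamma> :: real and R \<nu> and e :: "nat \<Rightarrow> real ^ 'd \<Rightarrow> real"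
    assume "a \<ge> 0" "\<gamma> > 0" and decomposition: "eigen_decomp (poly_kernel p a) P X R \<nu> e"
    then have "finite R \<and> (\<forall>x\<in>X. (\<Sum>r\<in>R. (e r x)\<^sup>2) \<le> C)"
      using C[of "monomial_weight a" R \<nu> e]
      by (simp add: poly_kernel_eq_feature_kernel monomial_weight_nonneg[OF \<open>a \<ge> 0\<close>])
    then show "H_gamma \<gamma> X R \<nu> e \<le> ereal C"
      using decomposition \<open>\<gamma> > 0\<close>
      by (intro H_gamma_le_of_sum_square_le) (auto simp: eigen_decomp_def)
  qed
qed

end
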